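(* Let $H$ be obtained from a graph $G$ on vertices $v_1,\dots,v_k$ by expanding each $v_i$ by the graph $M_i=(V_i,E_i)$. Let $\Omega$ be a potential maximal clique of $H$ and let $\Omega_G=\{v_i \mid V_i\cap\Omega\neq\emptyset\}$. If $\Omega=\bigcup_{v_i\in\Omega_G}V_i$, then $\Omega_G$ is a potential maximal clique of $G$.
   Context: Expansion: given a graph $G$ on vertices $v_1,\dots,v_k$ and pairwise disjoint graphs $M_i=(V_i,E_i)$, the graph $H$ obtained by expanding each $v_i$ by $M_i$ has vertex set $V_1\cup\dots\cup V_k$ and edge set $E_1\cup\dots\cup E_k\cup\{ab \mid a\in V_i, b\in V_j, v_iv_j\in E(G)\}$. A graph is chordal if every cycle of length at least 4 has a chord; a minimal triangulation of a graph $F$ is a chordal supergraph on the same vertex set such that no proper subset of its edge set containing $E(F)$ gives a chordal graph. A potential maximal clique of $F$ is a vertex set that is a maximal clique of some minimal triangulation of $F$. *)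

theory Defs
  imports Main
begin

definition graph :: "'a set \<Rightarrow> 'a set set \<Rightarrow> bool" where
  "graph V E \<longleftrightarrow> finite V \<and> (\<forall>e\<in>E. \<exists>u v. e = {u, v} \<and> u \<noteq> v \<and> u \<in> V \<and> v \<in> V)"

definition is_cycle :: "'a set set \<Rightarrow> 'a list \<Rightarrow> bool" where
  "is_cycle E xs \<longleftrightarrow> distinct xs \<and> length xs \<ge> 3 \<and>
     (\<forall>i < length xs. {xs ! i, xs ! ((i + 1) mod length xs)} \<in> E)"

definition has_chord :: "'a set set \<Rightarrow> 'a list \<Rightarrow> bool" where
  "has_chord E xs \<longleftrightarrow> (\<exists>i j. i < length xs \<and> j < length xs \<and> i \<noteq> j \<and>
     j \<noteq> (i + 1) mod length xs \<and> i \<noteq> (j + 1) mod length xs \<and> {xs ! i, xs ! j} \<in> E)"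

definition chordal :: "'a set \<Rightarrow> 'a set set \<Rightarrow> bool" where
  "chordal V E \<longleftrightarrow> (\<forall>xs. set xs \<subseteq> V \<and> is_cycle E xs \<and> length xs \<ge> 4 \<longrightarrow> has_chord E xs)"

definition minimal_triangulation :: "'a set \<Rightarrow> 'a set set \<Rightarrow> 'a set set \<Rightarrow> bool" where
  "minimal_triangulation V E F \<longleftrightarrow> graph V F \<and> E \<subseteq> F \<and> chordal V F \<and>
     (\<forall>F'. E \<subseteq> F' \<and> F' \<subset> F \<longrightarrow> \<not> chordal V F')"

definition clique :: "'a set \<Rightarrow> 'a set set \<Rightarrow> 'a set \<Rightarrow> bool" where
  "clique V E K \<longleftrightarrow> K \<subseteq> V \<and> (\<forall>u\<in>K. \<forall>v\<in>K. u \<noteq> v \<longrightarrow> {u, v} \<in> E)"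

definition maximal_clique :: "'a set \<Rightarrow> 'a set set \<Rightarrow> 'a set \<Rightarrow> bool" where
  "maximal_clique V E K \<longleftrightarrow> clique V E K \<and> (\<forall>K'. clique V E K' \<and> K \<subseteq> K' \<longrightarrow> K' = K)"

definition potential_maximal_clique :: "'a set \<Rightarrow> 'a set set \<Rightarrow> 'a set \<Rightarrow> bool" where
  "potential_maximal_clique V E \<Omega> \<longleftrightarrow>
     (\<exists>F. minimal_triangulation V E F \<and> maximal_clique V F \<Omega>)"

definition expansion_vertices :: "'v set \<Rightarrow> ('v \<Rightarrow> 'a set) \<Rightarrow> 'a set" where
  "expansion_vertices VG M = (\<Union>v\<in>VG. M v)"

definition expansion_edges ::
  "'v set \<Rightarrow> 'v set set \<Rightarrow> ('v \<Rightarrow> 'a set) \<Rightarrow> ('v \<Rightarrow> 'a set set) \<Rightarrow> 'a set set" where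
  "expansion_edges VG EG M EM = (\<Union>v\<in>VG. EM v) \<union>
     {{a, b} | a b. \<exists>i\<in>VG. \<exists>j\<in>VG. {i, j} \<in> EG \<and> a \<in> M i \<and> b \<in> M j}"

end

theory Submission
  imports Defs
begin

text \<open>By the characterisation of Bouchitt\'e and Todinca, a vertex set \<open>\<Omega>\<close> is a potential maximal
  clique iff no component of the graph minus \<open>\<Omega>\<close> has all of \<open>\<Omega>\<close> in its neighbourhood, and every
  non-adjacent pair in \<open>\<Omega>\<close> lies in the neighbourhood of a common component. When \<open>\<Omega>\<close> is a union
  of modules \<open>V\<^sub>i\<close>, the components of \<open>H - \<Omega>\<close> project into components of \<open>G - \<Omega>\<^sub>G\<close>, and
  representatives of the modules lift components back, with neighbourhoods corresponding; so both
  conditions pass from \<open>\<Omega>\<close> in \<open>H\<close> to \<open>\<Omega>\<^sub>G\<close> in \<open>G\<close>. Necessity of the conditions is needed in \<open>H\<close>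
  and sufficiency in \<open>G\<close>; for the latter, a minimal triangulation of \<open>G\<close> with \<open>\<Omega>\<^sub>G\<close> made a clique
  is shown to be a minimal triangulation of \<open>G\<close> itself, with \<open>\<Omega>\<^sub>G\<close> as a maximal clique.\<close>

section \<open>Walks and components\<close>

fun walk :: "'a set set \<Rightarrow> 'a set \<Rightarrow> 'a list \<Rightarrow> bool" where
  "walk E S [] = False"
| "walk E S [x] = (x \<in> S)"
| "walk E S (x # y # xs) = (x \<in> S \<and> {x, y} \<in> E \<and> walk E S (y # xs))"

lemma walk_nth:
  "walk E S xs \<longleftrightarrow> xs \<noteq> [] \<and> set xs \<subseteq> S \<and> (\<forall>i. Suc i < length xs \<longrightarrow> {xs!i, xs!Suc i} \<in> E)"
proof (induction E S xs rule: walk.induct)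
  case (3 E S x y xs)
  have "(\<forall>i. Suc i < length (x # y # xs) \<longrightarrow> {(x # y # xs)!i, (x # y # xs)!Suc i} \<in> E) \<longleftrightarrow>
        {x, y} \<in> E \<and> (\<forall>i. Suc i < length (y # xs) \<longrightarrow> {(y # xs)!i, (y # xs)!Suc i} \<in> E)"
    by (auto simp: less_Suc_eq_0_disj)
  then show ?case using "3.IH" by auto
qed auto

lemma walk_append:
  assumes "xs \<noteq> []" "ys \<noteq> []"
  shows "walk E S (xs @ ys) \<longleftrightarrow> walk E S xs \<and> walk E S ys \<and> {last xs, hd ys} \<in> E"
  using assms
proof (induction xs rule: induct_list012)
  case (3 x y zs)
  then show ?case by auto
qed (auto simp: neq_Nil_conv)

lemma walk_set: "walk E S xs \<Longrightarrow> set xs \<subseteq> S"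
  by (simp add: walk_nth)

lemma walk_mono: "walk E S xs \<Longrightarrow> E \<subseteq> E' \<Longrightarrow> S \<subseteq> S' \<Longrightarrow> walk E' S' xs"
  unfolding walk_nth by blast

lemma walk_restrict: "walk E S xs \<Longrightarrow> set xs \<subseteq> S' \<Longrightarrow> walk E S' xs"
  by (simp add: walk_nth)

lemma walk_segment:
  assumes "walk E S ps" "j < m" "m < length ps"
  obtains ys where "walk E S (ps ! j # ys)" "last (ps ! j # ys) = ps ! m"
    "\<And>b. b \<in> set ys \<Longrightarrow> \<exists>i. j < i \<and> i \<le> m \<and> b = ps ! i"
proof
  let ?ys = "drop (Suc j) (take (Suc m) ps)"
  have "drop j (take (Suc m) ps) = ps ! j # ?ys"
    using assms(2,3) by (simp add: Cons_nth_drop_Suc[symmetric])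
  moreover have "walk E S (drop j (take (Suc m) ps))"
    using assms by (auto simp: walk_nth dest: in_set_dropD in_set_takeD)
  ultimately show "walk E S (ps ! j # ?ys)" "last (ps ! j # ?ys) = ps ! m"
    using assms(2,3) last_drop[of j "take (Suc m) ps"] by (auto simp: take_Suc_conv_app_nth)
  fix b assume "b \<in> set ?ys"
  then obtain l where "l < length ?ys" "b = ?ys ! l" by (auto simp: in_set_conv_nth)
  moreover have "j < Suc j + l \<and> Suc j + l \<le> m \<and> ?ys ! l = ps ! (Suc j + l)"
    using \<open>l < length ?ys\<close> assms(3) by simp
  ultimately show "\<exists>i. j < i \<and> i \<le> m \<and> b = ps ! i" by blast
qed

lemma walk_join:
  assumes "walk E S (xs @ [x])" "walk E S (x # ys)"
  shows "walk E S (xs @ x # ys)"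
proof (cases "xs = []")
  case False
  then have "walk E S xs" "{last xs, x} \<in> E" using assms(1) walk_append[OF False, of "[x]"] by auto
  then show ?thesis using assms(2) walk_append[OF False, of "x # ys"] by simp
qed (use assms in simp)

lemma walk_extend_ends:
  assumes "walk E S ws" "u \<in> S" "v \<in> S" "{u, hd ws} \<in> E" "{last ws, v} \<in> E"
  shows "walk E S (u # ws @ [v])"
proof -
  have ne: "ws \<noteq> []" using assms(1) by auto
  then have "walk E S (ws @ [v])" using walk_append[OF ne, of "[v]"] assms by simp
  then show ?thesis using walk_append[of "[u]" "ws @ [v]"] assms ne by simp
qed

definition induced_path :: "'a set set \<Rightarrow> 'a set \<Rightarrow> 'a list \<Rightarrow> bool" where
  "induced_path E S p \<longleftrightarrow> walk E S p \<and> distinct p \<and>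
     (\<forall>i j. i + 1 < j \<and> j < length p \<longrightarrow> {p!i, p!j} \<notin> E)"

lemma walk_imp_induced_path:
  assumes "walk E S xs"
  shows "\<exists>p. induced_path E S p \<and> hd p = hd xs \<and> last p = last xs"
proof -
  let ?P = "\<lambda>ys. walk E S ys \<and> hd ys = hd xs \<and> last ys = last xs"
  obtain ys where ys: "?P ys" and shortest: "\<And>zs. ?P zs \<Longrightarrow> length ys \<le> length zs"
    using ex_has_least_nat[of ?P xs length] assms by blast
  have ne: "ys \<noteq> []" using ys by auto
  have "distinct ys"
  proof (rule ccontr)
    assume "\<not> distinct ys"
    then obtain us x vs ws where dec: "ys = us @ [x] @ vs @ [x] @ ws"
      using not_distinct_decomp by blast
    have "walk E S (us @ [x])"
      using ys dec walk_append[of "us @ [x]" "vs @ [x] @ ws" E S] by auto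
    moreover have "walk E S (x # ws)"
      using ys dec walk_append[of "us @ [x] @ vs" "x # ws" E S] by auto
    moreover have "hd (us @ x # ws) = hd xs" using ys dec by (cases us) auto
    moreover have "last (us @ x # ws) = last xs" using ys dec by (cases ws) auto
    ultimately have "?P (us @ x # ws)" by (simp add: walk_join)
    then show False using shortest dec by fastforce
  qed
  moreover have "{ys!i, ys!j} \<notin> E" if ij: "i + 1 < j" "j < length ys" for i j
  proof
    assume e: "{ys!i, ys!j} \<in> E"
    let ?zs = "take (Suc i) ys @ drop j ys"
    have ne: "take (Suc i) ys \<noteq> []" "drop (Suc i) ys \<noteq> []" "take j ys \<noteq> []" "drop j ys \<noteq> []"
      using ij by auto
    then have "walk E S (take (Suc i) ys)" "walk E S (drop j ys)"
      using ys walk_append[of "take (Suc i) ys" "drop (Suc i) ys" E S]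
        walk_append[of "take j ys" "drop j ys" E S] by auto
    moreover have "last (take (Suc i) ys) = ys ! i" "hd (drop j ys) = ys ! j"
      using ij by (simp_all add: take_Suc_conv_app_nth hd_drop_conv_nth)
    ultimately have "walk E S ?zs" using walk_append[OF ne(1,4)] e by simp
    then have "?P ?zs" using ys ij ne by (simp add: hd_append)
    then show False using shortest[of ?zs] ij by simp
  qed
  ultimately show ?thesis unfolding induced_path_def using ys by blast
qed

definition adj_in :: "'a set set \<Rightarrow> 'a set \<Rightarrow> ('a \<times> 'a) set" where
  "adj_in E S = {(x, y). x \<in> S \<and> y \<in> S \<and> {x, y} \<in> E}"

definition component :: "'a set set \<Rightarrow> 'a set \<Rightarrow> 'a \<Rightarrow> 'a set" where
  "component E S x = {y. (x, y) \<in> (adj_in E S)\<^sup>*}"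

definition neighbourhood :: "'a set \<Rightarrow> 'a set set \<Rightarrow> 'a set \<Rightarrow> 'a set" where
  "neighbourhood V E C = {x \<in> V. x \<notin> C \<and> (\<exists>c\<in>C. {c, x} \<in> E)}"

lemma adj_in_rtrancl_sym: "(x, y) \<in> (adj_in E S)\<^sup>* \<Longrightarrow> (y, x) \<in> (adj_in E S)\<^sup>*"
proof -
  have "(adj_in E S)\<inverse> = adj_in E S" unfolding adj_in_def by (auto simp: insert_commute)
  then show "(x, y) \<in> (adj_in E S)\<^sup>* \<Longrightarrow> (y, x) \<in> (adj_in E S)\<^sup>*"
    by (metis rtrancl_converseI)
qed

lemma adj_in_rtrancl_mono: "E \<subseteq> E' \<Longrightarrow> S \<subseteq> S' \<Longrightarrow> (adj_in E S)\<^sup>* \<subseteq> (adj_in E' S')\<^sup>*"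
  by (rule rtrancl_mono) (auto simp: adj_in_def)

lemma adj_in_rtrancl_closed:
  "(x, y) \<in> (adj_in E S)\<^sup>* \<Longrightarrow> x \<in> A \<Longrightarrow>
    (\<And>w w'. w \<in> A \<Longrightarrow> w' \<in> S \<Longrightarrow> {w, w'} \<in> E \<Longrightarrow> w' \<in> A) \<Longrightarrow> y \<in> A"
  by (induction rule: rtrancl_induct) (auto simp: adj_in_def)

lemma adj_in_rtrancl_imp_walk:
  "(x, y) \<in> (adj_in E S)\<^sup>* \<Longrightarrow> x \<in> S \<Longrightarrow> \<exists>xs. walk E S xs \<and> hd xs = x \<and> last xs = y"
proof (induction rule: rtrancl_induct)
  case base
  then show ?case by (intro exI[of _ "[x]"]) simp
next
  case (step y z)
  then obtain xs where xs: "walk E S xs" "hd xs = x" "last xs = y" by blast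
  then have "xs \<noteq> []" by auto
  then show ?case
    using xs step(2) walk_append[of xs "[z]" E S]
      by (intro exI[of _ "xs @ [z]"]) (auto simp: adj_in_def)
qed

lemma component_self: "x \<in> component E S x"
  unfolding component_def by simp

lemma component_subset: "x \<in> S \<Longrightarrow> component E S x \<subseteq> S"
  unfolding component_def using adj_in_rtrancl_closed[of x _ E S S] by blast

lemma component_eq: "z \<in> component E S x \<Longrightarrow> component E S z = component E S x"
  unfolding component_def using adj_in_rtrancl_sym rtrancl_trans by fast

lemma component_step:
  "z \<in> component E S x \<Longrightarrow> z \<in> S \<Longrightarrow> w \<in> S \<Longrightarrow> {z, w} \<in> E \<Longrightarrow> w \<in> component E S x"
  unfolding component_def adj_in_def by (auto intro: rtrancl_into_rtrancl)

lemma component_connected_within: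
  assumes "a \<in> component E S x" "b \<in> component E S x"
  shows "(a, b) \<in> (adj_in E (component E S x))\<^sup>*"
proof -
  have root: "(x, y) \<in> (adj_in E (component E S x))\<^sup>*" if "(x, y) \<in> (adj_in E S)\<^sup>*" for y
    using that
  proof (induction rule: rtrancl_induct)
    case (step y z)
    then have "(y, z) \<in> adj_in E (component E S x)"
      unfolding component_def adj_in_def by (auto intro: rtrancl_into_rtrancl)
    with step.IH show ?case by (rule rtrancl_into_rtrancl)
  qed simp
  show ?thesis
    using assms root[of a] root[of b] adj_in_rtrancl_sym rtrancl_trans
    unfolding component_def by fast
qed

lemma neighbourhood_component_subset:
  assumes "x \<in> S"
  shows "neighbourhood V E (component E S x) \<subseteq> V - S"
proof
  fix y assume y: "y \<in> neighbourhood V E (component E S x)"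
  then obtain c where c: "c \<in> component E S x" "{c, y} \<in> E" and y: "y \<in> V" "y \<notin> component E S x"
    unfolding neighbourhood_def by blast
  have "c \<in> S" using c(1) component_subset[OF assms] by blast
  then have "y \<notin> S" using component_step[OF c(1) _ _ c(2)] y(2) by blast
  with y(1) show "y \<in> V - S" by blast
qed

lemma walk_through_component:
  assumes "x \<in> S"
    "u \<in> neighbourhood V E (component E S x)" "v \<in> neighbourhood V E (component E S x)"
  shows "\<exists>ws. walk E (component E S x \<union> {u, v}) ws \<and> hd ws = u \<and> last ws = v"
proof -
  let ?C = "component E S x"
  obtain cu cv where c: "cu \<in> ?C" "{cu, u} \<in> E" "cv \<in> ?C" "{cv, v} \<in> E"
    using assms(2,3) unfolding neighbourhood_def by blast
  obtain ws where ws: "walk E ?C ws" "hd ws = cu" "last ws = cv"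
    using adj_in_rtrancl_imp_walk[OF component_connected_within[OF c(1,3)] c(1)] by blast
  have "walk E (?C \<union> {u, v}) ws" using walk_mono[OF ws(1)] by blast
  moreover have "{u, hd ws} \<in> E" "{last ws, v} \<in> E"
    using c ws(2,3) by (simp_all add: insert_commute)
  ultimately have "walk E (?C \<union> {u, v}) (u # ws @ [v])" by (simp add: walk_extend_ends)
  then show ?thesis by fastforce
qed

lemma component_disjoint:
  assumes "neighbourhood V E A \<subseteq> S" "y \<notin> A"
  shows "A \<inter> component E (V - S) y = {}"
proof (rule ccontr)
  assume "A \<inter> component E (V - S) y \<noteq> {}"
  then obtain x where "x \<in> A" "x \<in> component E (V - S) y" by blast
  then have x: "x \<in> A" "(x, y) \<in> (adj_in E (V - S))\<^sup>*"
    unfolding component_def by (auto intro: adj_in_rtrancl_sym)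
  have "w' \<in> A" if "w \<in> A" "w' \<in> V - S" "{w, w'} \<in> E" for w w'
    using that assms(1) unfolding neighbourhood_def by blast
  then have "y \<in> A" using adj_in_rtrancl_closed[OF x(2) x(1)] by blast
  with assms(2) show False ..
qed

section \<open>Chordal graphs\<close>

lemma has_chord_iff:
  "has_chord E xs \<longleftrightarrow>
    (\<exists>i j. i + 1 < j \<and> j < length xs \<and> \<not> (i = 0 \<and> j = length xs - 1) \<and> {xs!i, xs!j} \<in> E)"
proof
  assume "has_chord E xs"
  then obtain i j where ij: "i < length xs" "j < length xs" "i \<noteq> j" "j \<noteq> (i + 1) mod length xs"
    "i \<noteq> (j + 1) mod length xs" "{xs ! i, xs ! j} \<in> E" unfolding has_chord_def by blast
  have last_succ: "(k + 1) mod length xs = 0" if "k = length xs - 1" for k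
    using that ij by (cases "length xs") auto
  show "\<exists>i j. i + 1 < j \<and> j < length xs \<and> \<not> (i = 0 \<and> j = length xs - 1) \<and> {xs!i, xs!j} \<in> E"
  proof (cases "i < j")
    case True
    then show ?thesis using ij last_succ[of j] by (intro exI[of _ i] exI[of _ j]) auto
  next
    case False
    then show ?thesis using ij last_succ[of i]
      by (intro exI[of _ j] exI[of _ i]) (auto simp: insert_commute)
  qed
next
  assume "\<exists>i j. i + 1 < j \<and> j < length xs \<and> \<not> (i = 0 \<and> j = length xs - 1) \<and> {xs!i, xs!j} \<in> E"
  then obtain i j where ij: "i + 1 < j" "j < length xs" "\<not> (i = 0 \<and> j = length xs - 1)"
    "{xs!i, xs!j} \<in> E" by blast
  have "i \<noteq> (j + 1) mod length xs"
  proof (cases "j + 1 < length xs")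
    case False
    then have "j = length xs - 1" using ij by simp
    then show ?thesis using ij by (cases "length xs") auto
  qed (use ij in simp)
  then show "has_chord E xs" unfolding has_chord_def using ij
    by (intro exI[of _ i] exI[of _ j]) auto
qed

lemma is_cycle_mono: "is_cycle E xs \<Longrightarrow> E \<subseteq> E' \<Longrightarrow> is_cycle E' xs"
  unfolding is_cycle_def by auto

lemma is_cycle_step:
  assumes "is_cycle E xs"
  shows "{xs ! (k mod length xs), xs ! (Suc k mod length xs)} \<in> E"
proof -
  have "length xs > 0" using assms unfolding is_cycle_def by auto
  moreover have "(k mod length xs + 1) mod length xs = Suc k mod length xs"
    by (simp add: mod_Suc_eq)
  ultimately show ?thesis using assms unfolding is_cycle_def by (metis mod_less_divisor)
qed

text \<open>Positions are read cyclically: \<open>q\<close> may run past the end of the cycle, up to position \<open>i\<close>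
  again, so that \<open>i, p, j, q\<close> occur on the cycle in this order.\<close>
lemma has_chord_across_arcs:
  assumes cyc: "is_cycle E xs" and pos: "i < p" "p < j" "j < q" "q < length xs + i" "j < length xs"
    and X: "xs ! p \<in> X" "xs ! (q mod length xs) \<in> X"
    and clique: "\<And>x y. x \<in> X \<Longrightarrow> y \<in> X \<Longrightarrow> x \<noteq> y \<Longrightarrow> {x, y} \<noteq> {xs ! i, xs ! j} \<Longrightarrow> {x, y} \<in> E"
  shows "has_chord E xs"
proof -
  define n where "n = length xs"
  have dist: "distinct xs" using cyc unfolding is_cycle_def by simp
  have q_mod: "q mod n = (if q < n then q else q - n)" and "q - n < i \<or> q < n"
    using pos by (auto simp: n_def le_mod_geq)
  then have "q mod n \<notin> {i, j, p}" "q mod n < n" using pos n_def by auto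
  then have "xs ! (q mod n) \<notin> {xs ! i, xs ! j, xs ! p}"
    using dist pos by (auto simp: n_def nth_eq_iff_index_eq)
  moreover have "xs ! p \<notin> {xs ! i, xs ! j}" using dist pos by (auto simp: nth_eq_iff_index_eq)
  ultimately have "{xs ! p, xs ! (q mod n)} \<in> E"
    using X clique[of "xs ! p" "xs ! (q mod n)"] by (auto simp: n_def doubleton_eq_iff)
  then show ?thesis
  proof (cases "q < n")
    case True
    then show ?thesis unfolding has_chord_iff using \<open>{xs ! p, xs ! (q mod n)} \<in> E\<close> pos
      by (intro exI[of _ p] exI[of _ q]) (auto simp: n_def)
  next
    case False
    then show ?thesis unfolding has_chord_iff using \<open>{xs ! p, xs ! (q mod n)} \<in> E\<close> pos q_mod
      by (intro exI[of _ "q - n"] exI[of _ p]) (auto simp: n_def insert_commute)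
  qed
qed

lemma exists_between_outside:
  assumes "a \<le> b" "f a \<in> P" "f b \<in> Q" "P \<inter> Q = {}"
    and no_jump: "\<And>k. a \<le> k \<Longrightarrow> k < b \<Longrightarrow> f k \<in> P \<Longrightarrow> f (Suc k) \<notin> Q"
  shows "\<exists>p. a < p \<and> p < b \<and> f p \<notin> P \<union> Q"
proof (rule ccontr)
  assume "\<not> ?thesis"
  then have between: "a < p \<Longrightarrow> p < b \<Longrightarrow> f p \<in> P \<union> Q" for p by blast
  have "k \<le> b \<longrightarrow> f k \<in> P" if "a \<le> k" for k
    using that
  proof (induction k rule: dec_induct)
    case (step k)
    then show ?case using no_jump[of k] between[of "Suc k"] assms(3) by (cases "Suc k = b") auto
  qed (use assms(2) in simp)
  then have "f b \<in> P" using assms(1) by blast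
  with assms(3,4) show False by blast
qed

lemma walk_interior_vertex:
  assumes "walk E (A \<union> {u, v}) p" "distinct p" "hd p = u" "last p = v" "0 < k" "k < length p - 1"
  shows "p ! k \<in> A"
proof -
  have "p \<noteq> []" using assms(1) by auto
  then have ends: "p ! 0 = u" "p ! (length p - 1) = v"
    using assms(3,4) by (simp_all add: hd_conv_nth last_conv_nth)
  have "p ! k \<in> set p" using assms(6) by simp
  then have "p ! k \<in> A \<union> {u, v}" using walk_set[OF assms(1)] by blast
  moreover have "p ! k \<noteq> p ! 0" "p ! k \<noteq> p ! (length p - 1)"
  proof -
    have "k < length p" "length p - 1 < length p" "0 < length p" using assms(6) by auto
    then show "p ! k \<noteq> p ! 0" "p ! k \<noteq> p ! (length p - 1)"
      using assms(5,6) by (simp_all add: nth_eq_iff_index_eq[OF assms(2)])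
  qed
  ultimately show ?thesis using ends by auto
qed

lemma set_butlast_walk:
  assumes "walk E (A \<union> {u, v}) p" "distinct p" "hd p = u" "last p = v"
  shows "set (butlast p) \<subseteq> A \<union> {u}"
proof
  fix x assume "x \<in> set (butlast p)"
  then obtain k where "k < length p - 1" "x = p ! k" by (auto simp: in_set_conv_nth nth_butlast)
  moreover have "p \<noteq> []" using assms(1) by auto
  ultimately show "x \<in> A \<union> {u}"
    using walk_interior_vertex[OF assms, of k] assms(3) by (cases k) (auto simp: hd_conv_nth)
qed

lemma induced_path_length:
  assumes "induced_path E S p" "hd p = u" "last p = v" "u \<noteq> v" "{u, v} \<notin> E"
  shows "3 \<le> length p"
proof (rule ccontr)
  assume "\<not> 3 \<le> length p"
  moreover have "0 < length p" using assms(1) by (auto simp: induced_path_def)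
  ultimately have "length p = 1 \<or> length p = 2" by linarith
  then show False using assms by (auto simp: induced_path_def length_Suc_conv numeral_2_eq_2)
qed

lemma nth_butlast_append_paths:
  assumes "2 \<le> length p" "2 \<le> length q" "hd q = last p"
  shows "k \<le> length p - 1 \<Longrightarrow> (butlast p @ butlast q) ! k = p ! k"
    and "length p - 1 \<le> k \<Longrightarrow> k < length p + length q - 2 \<Longrightarrow>
      (butlast p @ butlast q) ! k = q ! (k - (length p - 1))"
proof -
  have "p \<noteq> []" "q \<noteq> []" using assms(1,2) by auto
  then have "q ! 0 = p ! (length p - 1)" using assms(3) by (simp add: hd_conv_nth last_conv_nth)
  then show "k \<le> length p - 1 \<Longrightarrow> (butlast p @ butlast q) ! k = p ! k"
    using assms(1,2) by (cases "k = length p - 1") (auto simp: nth_append nth_butlast)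
  show "length p - 1 \<le> k \<Longrightarrow> k < length p + length q - 2 \<Longrightarrow>
      (butlast p @ butlast q) ! k = q ! (k - (length p - 1))"
    by (auto simp: nth_append nth_butlast)
qed

lemma cycle_of_paths:
  assumes p: "walk E S p" "2 \<le> length p" and q: "walk E T q" "2 \<le> length q"
    and ends: "hd q = last p" "hd p = last q"
    and dist: "distinct (butlast p @ butlast q)" and len: "3 \<le> length (butlast p @ butlast q)"
  shows "is_cycle E (butlast p @ butlast q)"
proof -
  define m r c where "m = length p" and "r = length q" and "c = butlast p @ butlast q"
  have n: "length c = m + r - 2" using p(2) q(2) by (simp add: c_def m_def r_def)
  have pE: "Suc k < m \<Longrightarrow> {p ! k, p ! Suc k} \<in> E" for k using p(1) by (simp add: walk_nth m_def)
  have qE: "Suc k < r \<Longrightarrow> {q ! k, q ! Suc k} \<in> E" for k using q(1) by (simp add: walk_nth r_def)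
  note c_p = nth_butlast_append_paths(1)[OF p(2) q(2) ends(1), folded m_def c_def]
  note c_q = nth_butlast_append_paths(2)[OF p(2) q(2) ends(1), folded m_def r_def c_def]
  have "{c ! k, c ! ((k + 1) mod length c)} \<in> E" if k: "k < length c" for k
  proof -
    consider "Suc k \<le> m - 1" | "m - 1 \<le> k" "Suc k < length c" | "Suc k = length c"
      using k by linarith
    then show ?thesis
    proof cases
      case 1
      moreover have "Suc k < length c" using 1 n q(2) by (simp add: r_def)
      ultimately show ?thesis using c_p[of k] c_p[of "Suc k"] pE[of k] by simp
    next
      case 2
      then show ?thesis using c_q[of k] c_q[of "Suc k"] qE[of "k - (m - 1)"] n
        by (simp add: Suc_diff_le)
    next
      case 3
      have "p ! 0 = q ! (r - 1)"
      proof -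
        have "p \<noteq> []" "q \<noteq> []" using p(2) q(2) by auto
        then show ?thesis using ends(2) by (simp add: r_def hd_conv_nth last_conv_nth)
      qed
      moreover have "c ! k = q ! (r - 2)" using 3 c_q[of k] n p(2) q(2) by (simp add: m_def r_def)
      moreover have "Suc (r - 2) = r - 1" using q(2) by (simp add: r_def)
      ultimately show ?thesis using 3 c_p[of 0] qE[of "r - 2"] by simp
    qed
  qed
  then show ?thesis unfolding is_cycle_def using dist len by (simp add: c_def)
qed

lemma chordless_cycle_of_paths:
  assumes p: "induced_path E S p" "2 \<le> length p" and q: "induced_path E T q" "2 \<le> length q"
    and ends: "hd q = last p" "hd p = last q"
    and apart: "\<And>k l. 0 < k \<Longrightarrow> k < length p - 1 \<Longrightarrow> 0 < l \<Longrightarrow> l < length q - 1 \<Longrightarrow>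
      {p ! k, q ! l} \<notin> E"
  shows "\<not> has_chord E (butlast p @ butlast q)"
proof
  define m r c where "m = length p" and "r = length q" and "c = butlast p @ butlast q"
  assume "has_chord E (butlast p @ butlast q)"
  then obtain i j where ij: "i + 1 < j" "j < length c" "\<not> (i = 0 \<and> j = length c - 1)"
    "{c ! i, c ! j} \<in> E" unfolding has_chord_iff c_def by blast
  have n: "length c = m + r - 2" using p(2) q(2) by (simp add: c_def m_def r_def)
  note c_p = nth_butlast_append_paths(1)[OF p(2) q(2) ends(1), folded m_def c_def]
  note c_q = nth_butlast_append_paths(2)[OF p(2) q(2) ends(1), folded m_def r_def c_def]
  have p_ind: "\<And>i j. i + 1 < j \<Longrightarrow> j < m \<Longrightarrow> {p ! i, p ! j} \<notin> E"
    and q_ind: "\<And>i j. i + 1 < j \<Longrightarrow> j < r \<Longrightarrow> {q ! i, q ! j} \<notin> E"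
    using p(1) q(1) by (auto simp: induced_path_def m_def r_def)
  consider "j \<le> m - 1" | "m - 1 \<le> i" | "i = 0" "m - 1 < j" | "0 < i" "i < m - 1" "m - 1 < j"
    by linarith
  then show False
  proof cases
    case 1
    then show False using ij c_p[of i] c_p[of j] p_ind[of i j] p(2) by (simp add: m_def)
  next
    case 2
    moreover have "i - (m - 1) + 1 < j - (m - 1)" "j - (m - 1) < r" using 2 ij n by linarith+
    ultimately show False using ij n c_q[of i] c_q[of j] q_ind[of "i - (m - 1)" "j - (m - 1)"]
      by simp
  next
    case 3
    have "p ! 0 = q ! (r - 1)"
    proof -
      have "p \<noteq> []" "q \<noteq> []" using p(2) q(2) by auto
      then show ?thesis using ends(2) by (simp add: r_def hd_conv_nth last_conv_nth)
    qed
    moreover have "j - (m - 1) + 1 < r - 1" "r - 1 < r"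
      using 3 ij n p(2) q(2) unfolding m_def r_def by linarith+
    ultimately show False using 3 ij n c_p[of 0] c_q[of j] q_ind[of "j - (m - 1)" "r - 1"]
      by (simp add: insert_commute)
  next
    case 4
    moreover have "0 < j - (m - 1)" "j - (m - 1) < r - 1" using 4 ij n by linarith+
    ultimately show False using ij n c_p[of i] c_q[of j] apart[of i "j - (m - 1)"]
      by (simp add: m_def r_def)
  qed
qed

text \<open>Shortcutting both walks to induced paths yields a chordless cycle of length at least four
  unless \<open>u\<close> and \<open>v\<close> are adjacent.\<close>
lemma chordal_separated_walks_adjacent:
  assumes chordal: "chordal V E" and V: "A \<subseteq> V" "B \<subseteq> V" "u \<in> V" "v \<in> V" and "u \<noteq> v"
    and disj: "A \<inter> B = {}" "u \<notin> A \<union> B" "v \<notin> A \<union> B" and apart: "\<forall>a\<in>A. \<forall>b\<in>B. {a, b} \<notin> E"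
    and xs: "walk E (A \<union> {u, v}) xs" "hd xs = u" "last xs = v"
    and ys: "walk E (B \<union> {v, u}) ys" "hd ys = v" "last ys = u"
  shows "{u, v} \<in> E"
proof (rule ccontr)
  assume uv: "{u, v} \<notin> E"
  obtain p where p: "induced_path E (A \<union> {u, v}) p" "hd p = u" "last p = v"
    using walk_imp_induced_path[OF xs(1)] xs(2,3) by blast
  obtain q where q: "induced_path E (B \<union> {v, u}) q" "hd q = v" "last q = u"
    using walk_imp_induced_path[OF ys(1)] ys(2,3) by blast
  have len: "3 \<le> length p" "3 \<le> length q"
    using induced_path_length[OF p] induced_path_length[OF q] uv \<open>u \<noteq> v\<close>
      by (auto simp: insert_commute)
  have interior: "0 < k \<Longrightarrow> k < length p - 1 \<Longrightarrow> p ! k \<in> A"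
    "0 < k \<Longrightarrow> k < length q - 1 \<Longrightarrow> q ! k \<in> B" for k
    using walk_interior_vertex[of E A u v p] walk_interior_vertex[of E B v u q] p q
    by (auto simp: induced_path_def)
  have sets: "set (butlast p) \<subseteq> A \<union> {u}" "set (butlast q) \<subseteq> B \<union> {v}"
    using set_butlast_walk[of E A u v p] set_butlast_walk[of E B v u q] p q
    by (auto simp: induced_path_def)
  then have "distinct (butlast p @ butlast q)"
    using p(1) q(1) disj \<open>u \<noteq> v\<close> by (auto simp: induced_path_def distinct_butlast)
  then have "is_cycle E (butlast p @ butlast q)"
    using p q len by (intro cycle_of_paths) (auto simp: induced_path_def)
  moreover have "set (butlast p @ butlast q) \<subseteq> V" using sets V by auto
  ultimately have "has_chord E (butlast p @ butlast q)"
    using chordal len unfolding chordal_def by auto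
  moreover have "\<not> has_chord E (butlast p @ butlast q)"
    using p q len interior apart by (intro chordless_cycle_of_paths) auto
  ultimately show False by contradiction
qed

text \<open>Let \<open>j \<le> m\<close> be the last position adjacent to \<open>k\<close>. If \<open>j < m\<close>, then \<open>w, k, ps!j\<close> and
  \<open>ps!j, \<dots>, ps!m, w\<close> are walks between the non-adjacent \<open>w\<close> and \<open>ps!j\<close> that are separated.\<close>
lemma chordal_neighbour_along_walk:
  assumes chordal: "chordal V F" and "C \<subseteq> V" and wk: "w \<in> V - C" "k \<in> V - C" "w \<noteq> k" "{w, k} \<in> F"
    and ps: "walk F C ps" "{ps ! 0, k} \<in> F"
    and m: "m < length ps" "{ps ! m, w} \<in> F" "\<And>i. i < m \<Longrightarrow> {ps ! i, w} \<notin> F"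
  shows "{ps ! m, k} \<in> F"
proof (rule ccontr)
  assume not_adj: "{ps ! m, k} \<notin> F"
  define J where "J = {i. i \<le> m \<and> {ps ! i, k} \<in> F}"
  define j where "j = Max J"
  have "finite J" "0 \<in> J" using ps(2) unfolding J_def by auto
  then have "j \<in> J" and j_max: "\<And>i. i \<in> J \<Longrightarrow> i \<le> j" unfolding j_def using Max_in Max_ge by blast+
  then have j: "j < m" "{ps ! j, k} \<in> F" using not_adj unfolding J_def by (auto simp: le_less)
  obtain ys where zs: "walk F C (ps ! j # ys)" "last (ps ! j # ys) = ps ! m"
    and B_pos: "\<And>b. b \<in> set ys \<Longrightarrow> \<exists>i. j < i \<and> i \<le> m \<and> b = ps ! i"
    using walk_segment[OF ps(1) j(1) m(1)] by blast
  define B where "B = set ys"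
  have C: "set (ps ! j # ys) \<subseteq> C" using walk_set[OF zs(1)] .
  have B_apart: "\<forall>a\<in>{k}. \<forall>b\<in>B. {a, b} \<notin> F"
  proof (intro ballI notI)
    fix a b assume "a \<in> {k}" "b \<in> B" "{a, b} \<in> F"
    moreover obtain i where "j < i" "i \<le> m" "b = ps ! i" using B_pos \<open>b \<in> B\<close> B_def by blast
    ultimately have "i \<in> J" unfolding J_def by (simp add: insert_commute)
    then show False using j_max[of i] \<open>j < i\<close> by simp
  qed
  have in_C: "B \<subseteq> C" "ps ! j \<in> C" using C by (auto simp: B_def)
  have "ps ! j \<notin> B" using B_apart j(2) by (metis insert_commute singletonI)
  have "{w, ps ! j} \<in> F"
  proof (rule chordal_separated_walks_adjacent[OF chordal, of "{k}" B])
    show "walk F ({k} \<union> {w, ps ! j}) [w, k, ps ! j]" using wk j by (simp add: insert_commute)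
    have "walk F (C \<union> {w}) (ps ! j # ys)" using walk_mono[OF zs(1) order_refl] by blast
    then have "walk F (C \<union> {w}) ((ps ! j # ys) @ [w])"
      using zs(2) m(2) walk_append[of "ps ! j # ys" "[w]" F "C \<union> {w}"] by simp
    then show "walk F (B \<union> {ps ! j, w}) ((ps ! j # ys) @ [w])"
      by (rule walk_restrict) (auto simp: B_def)
    show "hd ((ps ! j # ys) @ [w]) = ps ! j" "last ((ps ! j # ys) @ [w]) = w" by simp_all
    show "{k} \<subseteq> V" "B \<subseteq> V" "w \<in> V" "ps ! j \<in> V" using wk in_C \<open>C \<subseteq> V\<close> by auto
    show "w \<noteq> ps ! j" "{k} \<inter> B = {}" "w \<notin> {k} \<union> B" "ps ! j \<notin> {k} \<union> B"
      using wk in_C \<open>ps ! j \<notin> B\<close> by auto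
    show "\<forall>a\<in>{k}. \<forall>b\<in>B. {a, b} \<notin> F" by (fact B_apart)
  qed simp_all
  then show False using m(3)[OF j(1)] by (simp add: insert_commute)
qed

text \<open>Induction on the clique: a vertex of \<open>C\<close> adjacent to all of \<open>K\<close> is found as the first
  neighbour of the new clique vertex on a walk inside \<open>C\<close>.\<close>
lemma chordal_dominating_vertex:
  assumes chordal: "chordal V F" and "finite K" "K \<subseteq> V"
    and clique: "\<forall>x\<in>K. \<forall>y\<in>K. x \<noteq> y \<longrightarrow> {x, y} \<in> F"
    and C: "C \<subseteq> V" "C \<inter> K = {}" "c0 \<in> C"
    and connected: "\<forall>x\<in>C. \<forall>y\<in>C. (x, y) \<in> (adj_in F C)\<^sup>*"
    and dominated: "\<forall>k\<in>K. \<exists>c\<in>C. {c, k} \<in> F"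
  shows "\<exists>c\<in>C. \<forall>k\<in>K. {c, k} \<in> F"
  using \<open>finite K\<close> \<open>K \<subseteq> V\<close> clique C(2) dominated
proof (induction K rule: finite_induct)
  case (insert w K)
  then obtain c1 where c1: "c1 \<in> C" "\<forall>k\<in>K. {c1, k} \<in> F" by blast
  obtain c2 where c2: "c2 \<in> C" "{c2, w} \<in> F" using insert.prems by blast
  show ?case
  proof (cases "{c1, w} \<in> F")
    case True
    then show ?thesis using c1 by blast
  next
    case False
    obtain ps where ps: "walk F C ps" "hd ps = c1" "last ps = c2"
      using adj_in_rtrancl_imp_walk[of c1 c2 F C] connected c1 c2 by blast
    then have "ps \<noteq> []" by auto
    then have ps_ends: "ps ! 0 = c1" "{ps ! (length ps - 1), w} \<in> F"
      using ps c2 by (simp_all add: hd_conv_nth last_conv_nth)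
    define m where "m = (LEAST i. {ps ! i, w} \<in> F)"
    have m: "{ps ! m, w} \<in> F" "\<And>i. i < m \<Longrightarrow> {ps ! i, w} \<notin> F"
      using LeastI[of "\<lambda>i. {ps ! i, w} \<in> F", OF ps_ends(2)] not_less_Least unfolding m_def by auto
    have "m < length ps" using Least_le[of "\<lambda>i. {ps ! i, w} \<in> F", OF ps_ends(2)] \<open>ps \<noteq> []\<close>
      unfolding m_def by (metis One_nat_def Suc_pred le_imp_less_Suc length_greater_0_conv)
    have "{ps ! m, k} \<in> F" if "k \<in> K" for k
    proof (rule chordal_neighbour_along_walk[OF chordal C(1) _ _ _ _ ps(1) _ \<open>m < length ps\<close> m])
      show "w \<in> V - C" "k \<in> V - C" "w \<noteq> k" using insert that by auto
      show "{w, k} \<in> F" using insert.prems(2) that insert.hyps(2) by (metis insertCI)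
      show "{ps ! 0, k} \<in> F" using ps_ends(1) c1(2) that by simp
    qed
    then show ?thesis using m(1) walk_set[OF ps(1)] \<open>m < length ps\<close>
      by (intro bexI[of _ "ps ! m"]) (auto simp: insert_commute)
  qed
qed (use C(3) in blast)

section \<open>Minimal triangulations\<close>

lemma graph_edge: "graph V F \<Longrightarrow> {a, b} \<in> F \<Longrightarrow> a \<in> V \<and> b \<in> V \<and> a \<noteq> b"
  unfolding graph_def by (metis doubleton_eq_iff)

lemma minimal_triangulation_exists:
  assumes "graph V E"
  shows "\<exists>T. minimal_triangulation V E T"
proof -
  define K where "K = {{x, y} | x y. x \<in> V \<and> y \<in> V \<and> x \<noteq> y}"
  have "finite V" using assms unfolding graph_def by simp
  moreover have "K \<subseteq> Pow V" by (auto simp: K_def)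
  ultimately have "finite K" by (meson finite_Pow_iff finite_subset)
  have EK: "E \<subseteq> K" using assms unfolding graph_def K_def by blast
  have "chordal V K"
    unfolding chordal_def
  proof (intro allI impI)
    fix xs assume xs: "set xs \<subseteq> V \<and> is_cycle K xs \<and> 4 \<le> length xs"
    then have "distinct xs" "0 < length xs" "2 < length xs" by (auto simp: is_cycle_def)
    then have "xs ! 0 \<noteq> xs ! 2" "xs ! 0 \<in> V" "xs ! 2 \<in> V"
      using xs nth_mem by (auto simp: nth_eq_iff_index_eq)
    then show "has_chord K xs" unfolding has_chord_iff K_def using xs
      by (intro exI[of _ 0] exI[of _ 2]) auto
  qed
  let ?P = "\<lambda>T. E \<subseteq> T \<and> T \<subseteq> K \<and> chordal V T"
  obtain T where T: "?P T" and least: "\<And>T'. ?P T' \<Longrightarrow> card T \<le> card T'"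
    using ex_has_least_nat[of ?P K card] EK \<open>chordal V K\<close> by blast
  have "finite T" using T \<open>finite K\<close> finite_subset by blast
  have "\<not> chordal V F'" if "E \<subseteq> F'" "F' \<subset> T" for F'
    using least[of F'] psubset_card_mono[OF \<open>finite T\<close> that(2)] that T by auto
  moreover have "graph V T" using T \<open>finite V\<close> unfolding graph_def K_def by blast
  ultimately show ?thesis unfolding minimal_triangulation_def using T by blast
qed

lemma chordal_subgraph:
  assumes "chordal V F" "F' \<subseteq> F"
    and rechord: "\<And>xs i j. set xs \<subseteq> V \<Longrightarrow> is_cycle F' xs \<Longrightarrow> 4 \<le> length xs \<Longrightarrow> i + 1 < j \<Longrightarrow>
      j < length xs \<Longrightarrow> \<not> (i = 0 \<and> j = length xs - 1) \<Longrightarrow> {xs ! i, xs ! j} \<in> F - F' \<Longrightarrow>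
      has_chord F' xs"
  shows "chordal V F'"
  unfolding chordal_def
proof (intro allI impI)
  fix xs assume xs: "set xs \<subseteq> V \<and> is_cycle F' xs \<and> 4 \<le> length xs"
  then have "has_chord F xs" using assms(1,2) is_cycle_mono unfolding chordal_def by blast
  then obtain i j where "i + 1 < j" "j < length xs" "\<not> (i = 0 \<and> j = length xs - 1)"
    "{xs ! i, xs ! j} \<in> F" unfolding has_chord_iff by blast
  then show "has_chord F' xs"
    using xs rechord[of xs i j] unfolding has_chord_iff by (cases "{xs ! i, xs ! j} \<in> F'") auto
qed

lemma cycle_arcs_meet_between:
  assumes cyc: "is_cycle E xs" and "P \<inter> Q = {}" and apart: "\<And>a b. a \<in> P \<Longrightarrow> b \<in> Q \<Longrightarrow> {a, b} \<notin> E"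
    and "i < j" "j < length xs" "xs ! i \<in> P" "xs ! j \<in> Q"
  shows "\<exists>p q. i < p \<and> p < j \<and> j < q \<and> q < length xs + i \<and>
    xs ! p \<notin> P \<union> Q \<and> xs ! (q mod length xs) \<notin> P \<union> Q"
proof -
  define f where "f k = xs ! (k mod length xs)" for k
  have step: "{f k, f (Suc k)} \<in> E" for k unfolding f_def by (rule is_cycle_step[OF cyc])
  have ends: "f i \<in> P" "f j \<in> Q" "f (length xs + i) \<in> P" using assms(4-7) by (simp_all add: f_def)
  have "f (Suc k) \<notin> Q" if "f k \<in> P" for k using step[of k] apart that by blast
  then obtain p where p: "i < p" "p < j" "f p \<notin> P \<union> Q"
    using exists_between_outside[of i j f P Q] ends assms(2,4) by auto
  have "f (Suc k) \<notin> P" if "f k \<in> Q" for k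
    using step[of k] apart[of "f (Suc k)" "f k"] that by (auto simp: insert_commute)
  then obtain q where q: "j < q" "q < length xs + i" "f q \<notin> Q \<union> P"
    using exists_between_outside[of j "length xs + i" f Q P] ends assms(2,5) by auto
  then show ?thesis using p q assms(5) unfolding f_def by (intro exI[of _ p] exI[of _ q]) auto
qed

text \<open>Deleting from \<open>F\<close> every edge that leaves \<open>C\<close> outside \<open>C \<union> N(C)\<close> keeps it chordal: a cycle that
  used such an edge as a chord has to pass through the clique \<open>N(C)\<close> on both of its arcs, which
  yields another chord. So by minimality no such edge exists.\<close>
lemma minimal_triangulation_edge_local:
  assumes mt: "minimal_triangulation V E F" and "C \<subseteq> V"
    and clique: "\<forall>x\<in>neighbourhood V E C. \<forall>y\<in>neighbourhood V E C. x \<noteq> y \<longrightarrow> {x, y} \<in> F"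
    and "c \<in> C" "{c, y} \<in> F"
  shows "y \<in> C \<union> neighbourhood V E C"
proof -
  define X where "X = neighbourhood V E C"
  define Y where "Y = - (C \<union> X)"
  define F' where "F' = {e \<in> F. \<forall>c y. e = {c, y} \<and> c \<in> C \<longrightarrow> y \<in> C \<union> X}"
  have F: "graph V F" "E \<subseteq> F" "chordal V F" and minimal: "\<forall>F'. E \<subseteq> F' \<and> F' \<subset> F \<longrightarrow> \<not> chordal V F'"
    using mt unfolding minimal_triangulation_def by auto
  have "X \<inter> C = {}" "C \<inter> Y = {}" unfolding X_def Y_def neighbourhood_def by auto
  have apart: "{a, b} \<notin> F'" "{b, a} \<notin> F'" if "a \<in> C" "b \<in> Y" for a b
    using that unfolding F'_def Y_def by (auto simp: insert_commute)
  have "E \<subseteq> F'"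
    using F(1,2) graph_edge[OF F(1)] unfolding F'_def X_def neighbourhood_def by blast
  moreover have "chordal V F'"
  proof (rule chordal_subgraph[OF F(3)])
    fix xs i j assume cyc: "is_cycle F' xs" and ij: "i + 1 < j" "j < length xs"
      and chord: "{xs ! i, xs ! j} \<in> F - F'"
    then have "xs ! i \<in> C \<and> xs ! j \<in> Y \<or> xs ! i \<in> Y \<and> xs ! j \<in> C"
      unfolding F'_def Y_def by (auto simp: doubleton_eq_iff)
    moreover have "Y \<inter> C = {}" using \<open>C \<inter> Y = {}\<close> by blast
    ultimately obtain p q where pq: "i < p" "p < j" "j < q" "q < length xs + i"
      "xs ! p \<notin> C \<union> Y" "xs ! (q mod length xs) \<notin> C \<union> Y"
    proof (elim disjE conjE)
      assume "xs ! i \<in> C" "xs ! j \<in> Y"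
      then obtain p q where "i < p" "p < j" "j < q" "q < length xs + i"
        "xs ! p \<notin> C \<union> Y" "xs ! (q mod length xs) \<notin> C \<union> Y"
        using cycle_arcs_meet_between[OF cyc \<open>C \<inter> Y = {}\<close> apart(1), of i j] ij by auto
      then show thesis by (rule that)
    next
      assume "xs ! i \<in> Y" "xs ! j \<in> C"
      then obtain p q where "i < p" "p < j" "j < q" "q < length xs + i"
        "xs ! p \<notin> Y \<union> C" "xs ! (q mod length xs) \<notin> Y \<union> C"
        using cycle_arcs_meet_between[OF cyc \<open>Y \<inter> C = {}\<close> apart(2), of i j] ij by auto
      then show thesis by (intro that) auto
    qed
    then have pX: "xs ! p \<in> X" "xs ! (q mod length xs) \<in> X" unfolding Y_def by auto
    show "has_chord F' xs"
    proof (rule has_chord_across_arcs[OF cyc pq(1-4) ij(2) pX])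
      fix x y assume "x \<in> X" "y \<in> X" "x \<noteq> y"
      then show "{x, y} \<in> F'"
        using clique \<open>X \<inter> C = {}\<close> unfolding F'_def X_def by (auto simp: doubleton_eq_iff)
    qed
  qed (auto simp: F'_def)
  ultimately have "F' = F" using minimal unfolding F'_def by blast
  then show ?thesis using assms(4,5) unfolding F'_def X_def by blast
qed

section \<open>Potential maximal cliques\<close>

text \<open>The two conditions of the characterisation of potential maximal cliques by Bouchitt\'e and
  Todinca.\<close>
definition no_full_component :: "'a set \<Rightarrow> 'a set set \<Rightarrow> 'a set \<Rightarrow> bool" where
  "no_full_component V E \<Omega> \<longleftrightarrow>
    (\<forall>x\<in>V - \<Omega>. \<not> \<Omega> \<subseteq> neighbourhood V E (component E (V - \<Omega>) x))"

definition covers_non_edges :: "'a set \<Rightarrow> 'a set set \<Rightarrow> 'a set \<Rightarrow> bool" where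
  "covers_non_edges V E \<Omega> \<longleftrightarrow> (\<forall>a\<in>\<Omega>. \<forall>b\<in>\<Omega>. a \<noteq> b \<and> {a, b} \<notin> E \<longrightarrow>
    (\<exists>x\<in>V - \<Omega>. {a, b} \<subseteq> neighbourhood V E (component E (V - \<Omega>) x)))"

lemma minimal_triangulation_edge_from_component:
  assumes mt: "minimal_triangulation V E F" and clique: "\<forall>x\<in>\<Omega>. \<forall>y\<in>\<Omega>. x \<noteq> y \<longrightarrow> {x, y} \<in> F"
    and "x \<in> V - \<Omega>" "{x, z} \<in> F"
  shows "z \<in> \<Omega> \<Longrightarrow> z \<in> neighbourhood V E (component E (V - \<Omega>) x)"
    and "z \<notin> \<Omega> \<Longrightarrow> z \<in> component E (V - \<Omega>) x"
proof -
  let ?C = "component E (V - \<Omega>) x"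
  have "?C \<subseteq> V - \<Omega>" "neighbourhood V E ?C \<subseteq> \<Omega>"
    using component_subset[OF assms(3), of E] neighbourhood_component_subset[OF assms(3), of V E]
    by auto
  moreover have "z \<in> ?C \<union> neighbourhood V E ?C"
  proof (rule minimal_triangulation_edge_local[OF mt _ _ component_self assms(4)])
    show "?C \<subseteq> V" using calculation(1) by blast
    show "\<forall>u\<in>neighbourhood V E ?C. \<forall>w\<in>neighbourhood V E ?C. u \<noteq> w \<longrightarrow> {u, w} \<in> F"
      using calculation(2) clique by blast
  qed
  ultimately show "z \<in> \<Omega> \<Longrightarrow> z \<in> neighbourhood V E ?C" "z \<notin> \<Omega> \<Longrightarrow> z \<in> ?C" by blast+
qed

text \<open>A full component would contain, by chordality, a vertex adjacent to all of \<open>\<Omega>\<close>, contradicting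
  the maximality of the clique \<open>\<Omega>\<close>.\<close>
lemma potential_maximal_clique_no_full_component:
  assumes "potential_maximal_clique V E \<Omega>"
  shows "no_full_component V E \<Omega>"
  unfolding no_full_component_def
proof (intro ballI notI)
  obtain F where mt: "minimal_triangulation V E F" and mc: "maximal_clique V F \<Omega>"
    using assms unfolding potential_maximal_clique_def by blast
  then have F: "graph V F" "E \<subseteq> F" "chordal V F" and \<Omega>: "clique V F \<Omega>"
    unfolding minimal_triangulation_def maximal_clique_def by auto
  fix x assume x: "x \<in> V - \<Omega>"
  let ?C = "component E (V - \<Omega>) x"
  assume full: "\<Omega> \<subseteq> neighbourhood V E ?C"
  have C: "?C \<subseteq> V" "?C \<inter> \<Omega> = {}" using component_subset[OF x, of E] by auto
  have connected: "\<forall>a\<in>?C. \<forall>b\<in>?C. (a, b) \<in> (adj_in F ?C)\<^sup>*"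
    using component_connected_within[of _ E "V - \<Omega>" x]
      adj_in_rtrancl_mono[OF F(2) order_refl, of ?C]
    by blast
  have dominated: "\<forall>k\<in>\<Omega>. \<exists>c\<in>?C. {c, k} \<in> F"
    using full F(2) unfolding neighbourhood_def by blast
  have "finite \<Omega>" "\<Omega> \<subseteq> V" "\<forall>a\<in>\<Omega>. \<forall>b\<in>\<Omega>. a \<noteq> b \<longrightarrow> {a, b} \<in> F"
    using F(1) \<Omega> finite_subset unfolding graph_def clique_def by blast+
  then obtain c where c: "c \<in> ?C" "\<forall>k\<in>\<Omega>. {c, k} \<in> F"
    using chordal_dominating_vertex[OF F(3) _ _ _ C component_self connected dominated] by blast
  then have "clique V F (insert c \<Omega>)"
    using \<Omega> C unfolding clique_def by (auto simp: insert_commute)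
  then have "insert c \<Omega> = \<Omega>" using mc unfolding maximal_clique_def by blast
  then show False using c(1) C by blast
qed

lemma minimal_triangulation_arc_outside_clique:
  assumes mt: "minimal_triangulation V E F" and clique: "\<forall>x\<in>\<Omega>. \<forall>y\<in>\<Omega>. x \<noteq> y \<longrightarrow> {x, y} \<in> F"
    and f: "\<And>k. f k \<in> V" "\<And>k. {f k, f (Suc k)} \<in> F"
    and st: "s + 1 < t" "f s \<in> \<Omega>" "f t \<in> \<Omega>" and outside: "\<And>p. s < p \<Longrightarrow> p < t \<Longrightarrow> f p \<notin> \<Omega>"
  shows "\<exists>x\<in>V - \<Omega>. {f s, f t} \<subseteq> neighbourhood V E (component E (V - \<Omega>) x)"
proof -
  note edge = minimal_triangulation_edge_from_component[OF mt clique]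
  define x where "x = f (Suc s)"
  let ?C = "component E (V - \<Omega>) x"
  have out: "f k \<in> V - \<Omega>" if "s < k" "k < t" for k using f(1)[of k] outside[OF that] by blast
  have in_C: "k < t \<Longrightarrow> f k \<in> ?C" if "Suc s \<le> k" for k
    using that
  proof (induction k rule: dec_induct)
    case base
    then show ?case by (simp add: x_def component_self)
  next
    case (step k)
    then have k: "s < k" "k < t" "f k \<in> ?C" by simp_all
    have "f (Suc k) \<notin> \<Omega>" using outside[of "Suc k"] step by simp
    then have "f (Suc k) \<in> component E (V - \<Omega>) (f k)"
      by (rule edge(2)[OF out[OF k(1,2)] f(2)[of k]])
    then show ?case using component_eq[OF k(3)] by simp
  qed
  have x: "x \<in> V - \<Omega>" using out[of "Suc s"] st(1) by (simp add: x_def)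
  have "{x, f s} \<in> F" using f(2)[of s] by (simp add: x_def insert_commute)
  then have "f s \<in> neighbourhood V E ?C" by (rule edge(1)[OF x _ st(2)])
  moreover have "f t \<in> neighbourhood V E (component E (V - \<Omega>) (f (t - 1)))"
  proof (rule edge(1)[OF out _ st(3)])
    show "{f (t - 1), f t} \<in> F" using f(2)[of "t - 1"] st(1) by simp
  qed (use st(1) in simp_all)
  then have "f t \<in> neighbourhood V E ?C" using component_eq[OF in_C[of "t - 1"]] st(1) by simp
  ultimately show ?thesis using x by blast
qed

text \<open>Each arc of a cycle between \<open>a\<close> and \<open>b\<close> has to meet \<open>\<Omega>\<close> again, since otherwise its interior
  would lie in a component covering \<open>ab\<close>; the two vertices of \<open>\<Omega>\<close> so found form a chord other
  than \<open>ab\<close>.\<close>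
lemma chordal_delete_uncovered_edge:
  assumes mt: "minimal_triangulation V E F" and clique: "\<forall>x\<in>\<Omega>. \<forall>y\<in>\<Omega>. x \<noteq> y \<longrightarrow> {x, y} \<in> F"
    and ab: "a \<in> \<Omega>" "b \<in> \<Omega>"
    and uncovered: "\<not> (\<exists>x\<in>V - \<Omega>. {a, b} \<subseteq> neighbourhood V E (component E (V - \<Omega>) x))"
  shows "chordal V (F - {{a, b}})"
proof (rule chordal_subgraph)
  show "chordal V F" using mt unfolding minimal_triangulation_def by blast
  fix xs i j assume V: "set xs \<subseteq> V" and cyc: "is_cycle (F - {{a, b}}) xs" and ij: "i + 1 < j"
    "j < length xs" "\<not> (i = 0 \<and> j = length xs - 1)" and "{xs ! i, xs ! j} \<in> F - (F - {{a, b}})"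
  then have chord: "{xs ! i, xs ! j} = {a, b}" by simp
  define f where "f k = xs ! (k mod length xs)" for k
  have f: "f k \<in> V" "{f k, f (Suc k)} \<in> F" for k
  proof -
    have "k mod length xs < length xs" using ij(2) by (intro mod_less_divisor) linarith
    then show "f k \<in> V" using V nth_mem unfolding f_def by blast
    show "{f k, f (Suc k)} \<in> F" using is_cycle_step[OF cyc, of k] unfolding f_def by blast
  qed
  have arc: "\<exists>p. s < p \<and> p < t \<and> f p \<in> \<Omega>" if st: "s + 1 < t" "{f s, f t} = {a, b}" for s t
  proof (rule ccontr)
    assume "\<nexists>p. s < p \<and> p < t \<and> f p \<in> \<Omega>"
    moreover have "f s \<in> \<Omega>" "f t \<in> \<Omega>" using st(2) ab by (auto simp: doubleton_eq_iff)
    ultimately obtain x where "x \<in> V - \<Omega>" "{f s, f t} \<subseteq> neighbourhood V E (component E (V - \<Omega>) x)"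
      using minimal_triangulation_arc_outside_clique[OF mt clique, of f, OF f st(1)] by blast
    then show False using uncovered unfolding st(2) by blast
  qed
  have ends: "f i = xs ! i" "f j = xs ! j" "f (length xs + i) = xs ! i"
    using ij by (simp_all add: f_def)
  obtain p where p: "i < p" "p < j" "f p \<in> \<Omega>" using arc[of i j] ij(1) chord ends by auto
  have "j + 1 < length xs + i" using ij by (cases "i = 0") auto
  then obtain q where q: "j < q" "q < length xs + i" "f q \<in> \<Omega>"
    using arc[of j "length xs + i"] chord ends by (auto simp: insert_commute)
  show "has_chord (F - {{a, b}}) xs"
  proof (rule has_chord_across_arcs[OF cyc p(1,2) q(1,2) ij(2)])
    show "xs ! p \<in> \<Omega>" "xs ! (q mod length xs) \<in> \<Omega>" using p q ij by (auto simp: f_def)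
    show "{x, y} \<in> F - {{a, b}}" if "x \<in> \<Omega>" "y \<in> \<Omega>" "x \<noteq> y" "{x, y} \<noteq> {xs ! i, xs ! j}" for x y
      using that clique chord by blast
  qed
qed auto

text \<open>Otherwise the uncovered non-edge could be deleted from the minimal triangulation.\<close>
lemma potential_maximal_clique_covers_non_edges:
  assumes "potential_maximal_clique V E \<Omega>"
  shows "covers_non_edges V E \<Omega>"
  unfolding covers_non_edges_def
proof (intro ballI impI, rule ccontr)
  obtain F where mt: "minimal_triangulation V E F" and mc: "maximal_clique V F \<Omega>"
    using assms unfolding potential_maximal_clique_def by blast
  then have "E \<subseteq> F" and minimal: "\<forall>F'. E \<subseteq> F' \<and> F' \<subset> F \<longrightarrow> \<not> chordal V F'"
    and clique: "\<forall>x\<in>\<Omega>. \<forall>y\<in>\<Omega>. x \<noteq> y \<longrightarrow> {x, y} \<in> F"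
    unfolding minimal_triangulation_def maximal_clique_def clique_def by auto
  fix a b assume ab: "a \<in> \<Omega>" "b \<in> \<Omega>" "a \<noteq> b \<and> {a, b} \<notin> E"
    and "\<not> (\<exists>x\<in>V - \<Omega>. {a, b} \<subseteq> neighbourhood V E (component E (V - \<Omega>) x))"
  then have "chordal V (F - {{a, b}})" by (intro chordal_delete_uncovered_edge[OF mt clique])
  moreover have "E \<subseteq> F - {{a, b}}" "F - {{a, b}} \<subset> F" using \<open>E \<subseteq> F\<close> ab clique by auto
  ultimately show False using minimal by blast
qed

definition add_clique :: "'a set set \<Rightarrow> 'a set \<Rightarrow> 'a set set" where
  "add_clique E K = E \<union> {{x, y} | x y. x \<in> K \<and> y \<in> K \<and> x \<noteq> y}"

lemma graph_add_clique: "graph V E \<Longrightarrow> K \<subseteq> V \<Longrightarrow> graph V (add_clique E K)"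
  unfolding graph_def add_clique_def by blast

lemma neighbourhood_add_clique:
  assumes "A \<inter> K = {}"
  shows "neighbourhood V (add_clique E K) A = neighbourhood V E A"
  using assms unfolding neighbourhood_def add_clique_def by (auto simp: doubleton_eq_iff)

lemma completion_edge_local:
  assumes mt: "minimal_triangulation V (add_clique E \<Omega>) T" and "z \<in> V - \<Omega>"
    and "c \<in> component E (V - \<Omega>) z" "{c, y} \<in> T"
  shows "y \<in> component E (V - \<Omega>) z \<union> neighbourhood V E (component E (V - \<Omega>) z)"
proof -
  let ?C = "component E (V - \<Omega>) z"
  have C: "?C \<subseteq> V - \<Omega>" by (rule component_subset[OF assms(2)])
  then have N: "neighbourhood V (add_clique E \<Omega>) ?C = neighbourhood V E ?C"
    by (intro neighbourhood_add_clique) blast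
  have "neighbourhood V E ?C \<subseteq> \<Omega>"
    using neighbourhood_component_subset[OF assms(2), of V E] by blast
  moreover have "add_clique E \<Omega> \<subseteq> T" using mt unfolding minimal_triangulation_def by blast
  ultimately have "{x, y} \<in> T"
    if "x \<in> neighbourhood V E ?C" "y \<in> neighbourhood V E ?C" "x \<noteq> y" for x y
    using that unfolding add_clique_def by blast
  then have "y \<in> ?C \<union> neighbourhood V (add_clique E \<Omega>) ?C"
    using C by (intro minimal_triangulation_edge_local[OF mt _ _ assms(3,4)]) (auto simp: N)
  then show ?thesis unfolding N .
qed

lemma maximal_clique_of_completion:
  assumes mt: "minimal_triangulation V (add_clique E \<Omega>) T" and "\<Omega> \<subseteq> V"
    and no_full: "no_full_component V E \<Omega>"
  shows "maximal_clique V T \<Omega>"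
  unfolding maximal_clique_def
proof (intro conjI allI impI)
  have "add_clique E \<Omega> \<subseteq> T" using mt unfolding minimal_triangulation_def by blast
  moreover have "{x, y} \<in> add_clique E \<Omega>" if "x \<in> \<Omega>" "y \<in> \<Omega>" "x \<noteq> y" for x y
    using that unfolding add_clique_def by blast
  ultimately show "clique V T \<Omega>" using \<open>\<Omega> \<subseteq> V\<close> unfolding clique_def by blast
  fix K assume K: "clique V T K \<and> \<Omega> \<subseteq> K"
  show "K = \<Omega>"
  proof (rule ccontr)
    assume "K \<noteq> \<Omega>"
    then obtain w where "w \<in> K" "w \<notin> \<Omega>" using K by blast
    moreover have K': "K \<subseteq> V" "\<forall>u\<in>K. \<forall>v\<in>K. u \<noteq> v \<longrightarrow> {u, v} \<in> T" "\<Omega> \<subseteq> K"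
      using K unfolding clique_def by simp_all
    ultimately have w: "w \<in> K" "w \<in> V - \<Omega>" by blast+
    let ?A = "component E (V - \<Omega>) w"
    have "y \<in> neighbourhood V E ?A" if "y \<in> \<Omega>" for y
    proof -
      have "w \<noteq> y" "y \<in> K" using w that K'(3) by blast+
      then have "{w, y} \<in> T" using K'(2) w(1) by blast
      then have "y \<in> ?A \<union> neighbourhood V E ?A"
        by (rule completion_edge_local[OF mt w(2) component_self])
      then show ?thesis using component_subset[OF w(2), of E] that by blast
    qed
    then have "\<Omega> \<subseteq> neighbourhood V E ?A" by blast
    then show False using no_full w(2) unfolding no_full_component_def by blast
  qed
qed

text \<open>Here \<open>S\<close> is the neighbourhood of a component of \<open>V - \<Omega>\<close> and \<open>y \<in> \<Omega> - S\<close>. Every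
  \<open>x \<in> S\<close> is adjacent to \<open>y\<close> or shares with it the neighbourhood of another component of
  \<open>V - \<Omega>\<close>; either way \<open>x\<close> has a neighbour in the component of \<open>V - S\<close> containing \<open>y\<close>.\<close>
lemma neighbourhood_subset_other_component:
  assumes covers: "covers_non_edges V E \<Omega>" and "\<Omega> \<subseteq> V"
    and S: "S \<subseteq> \<Omega>" and y: "y \<in> \<Omega> - S" and x: "x \<in> S"
  shows "x \<in> neighbourhood V E (component E (V - S) y)"
proof -
  let ?B = "component E (V - S) y"
  have yB: "y \<in> V - S" using y \<open>\<Omega> \<subseteq> V\<close> by blast
  have B: "?B \<subseteq> V - S" by (rule component_subset[OF yB])
  have xV: "x \<in> V" "x \<notin> ?B" using x S \<open>\<Omega> \<subseteq> V\<close> B by blast+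
  show ?thesis
  proof (cases "{y, x} \<in> E")
    case True
    then show ?thesis using xV component_self[of y E "V - S"] unfolding neighbourhood_def by blast
  next
    case False
    then have "x \<noteq> y \<and> {x, y} \<notin> E" using x y by (auto simp: insert_commute)
    moreover have "x \<in> \<Omega>" "y \<in> \<Omega>" using x y S by blast+
    ultimately obtain z where z: "z \<in> V - \<Omega>" "{x, y} \<subseteq> neighbourhood V E (component E (V - \<Omega>) z)"
      using covers[unfolded covers_non_edges_def, rule_format, of x y] by blast
    let ?A = "component E (V - \<Omega>) z"
    have A: "?A \<subseteq> V - S" using component_subset[OF z(1), of E] S by blast
    obtain c c' where c: "c \<in> ?A" "{c, y} \<in> E" "c' \<in> ?A" "{c', x} \<in> E"
      using z(2) unfolding neighbourhood_def by blast
    have "(y, c) \<in> adj_in E (V - S)" using c(1,2) A yB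
      unfolding adj_in_def by (auto simp: insert_commute)
    moreover have "(c, c') \<in> (adj_in E (V - S))\<^sup>*"
      using component_connected_within[OF c(1) c(3)] adj_in_rtrancl_mono[OF order_refl A] by blast
    ultimately have "(y, c') \<in> (adj_in E (V - S))\<^sup>*" by (rule converse_rtrancl_into_rtrancl)
    then have "c' \<in> ?B" by (simp add: component_def)
    then show ?thesis using xV c(4) unfolding neighbourhood_def by blast
  qed
qed

lemma completion_no_edge_across:
  assumes mt: "minimal_triangulation V (add_clique E \<Omega>) T" and "z \<in> V - \<Omega>"
    and "y \<in> \<Omega> - neighbourhood V E (component E (V - \<Omega>) z)" "\<Omega> \<subseteq> V"
  defines "A \<equiv> component E (V - \<Omega>) z"
  defines "B \<equiv> component E (V - neighbourhood V E A) y"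
  shows "\<forall>a\<in>A. \<forall>b\<in>B. {a, b} \<notin> T"
proof (intro ballI notI)
  have A: "A \<subseteq> V - \<Omega>" unfolding A_def by (rule component_subset[OF assms(2)])
  have B: "B \<subseteq> V - neighbourhood V E A"
    unfolding B_def using assms(3,4) by (intro component_subset) (auto simp: A_def)
  have "A \<inter> B = {}" unfolding B_def using assms(3) A
    by (intro component_disjoint) (auto simp: A_def)
  fix a b assume "a \<in> A" "b \<in> B" "{a, b} \<in> T"
  then have "b \<in> A \<union> neighbourhood V E A"
    using completion_edge_local[OF mt assms(2)] unfolding A_def by blast
  then show False using \<open>b \<in> B\<close> B \<open>A \<inter> B = {}\<close> by blast
qed

text \<open>A non-edge \<open>uv\<close> of \<open>\<Omega>\<close> lies in the neighbourhood \<open>S\<close> of a component \<open>A\<close> of \<open>V - \<Omega>\<close>, and also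
  in that of the component \<open>B\<close> of \<open>V - S\<close> through a vertex of \<open>\<Omega> - S\<close>; walks through \<open>A\<close> and through
  \<open>B\<close> then force \<open>uv\<close> into every chordal graph between \<open>E\<close> and \<open>T\<close>.\<close>
lemma completion_edges_forced:
  assumes mt: "minimal_triangulation V (add_clique E \<Omega>) T" and "\<Omega> \<subseteq> V"
    and no_full: "no_full_component V E \<Omega>" and covers: "covers_non_edges V E \<Omega>"
    and F': "E \<subseteq> F'" "F' \<subseteq> T" "chordal V F'" and uv: "u \<in> \<Omega>" "v \<in> \<Omega>" "u \<noteq> v"
  shows "{u, v} \<in> F'"
proof (rule ccontr)
  assume "{u, v} \<notin> F'"
  then have "{u, v} \<notin> E" using F'(1) by blast
  then obtain z where z: "z \<in> V - \<Omega>" "{u, v} \<subseteq> neighbourhood V E (component E (V - \<Omega>) z)"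
    using covers uv unfolding covers_non_edges_def by blast
  define A where "A = component E (V - \<Omega>) z"
  define S where "S = neighbourhood V E A"
  have A: "A \<subseteq> V - \<Omega>" unfolding A_def by (rule component_subset[OF z(1)])
  have S: "S \<subseteq> \<Omega>" using neighbourhood_component_subset[OF z(1), of V E]
    unfolding S_def A_def by blast
  obtain y where y: "y \<in> \<Omega> - S" using no_full z(1)
    unfolding no_full_component_def S_def A_def by blast
  define B where "B = component E (V - S) y"
  have B: "B \<subseteq> V - S" unfolding B_def using y \<open>\<Omega> \<subseteq> V\<close> by (intro component_subset) blast
  have "A \<inter> B = {}" unfolding B_def using y A by (intro component_disjoint) (auto simp: S_def)
  have apart: "\<forall>a\<in>A. \<forall>b\<in>B. {a, b} \<notin> F'"
    using completion_no_edge_across[OF mt z(1) y[unfolded S_def A_def] \<open>\<Omega> \<subseteq> V\<close>] F'(2)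
    unfolding A_def S_def B_def by blast
  obtain xs where xs: "walk E (A \<union> {u, v}) xs" "hd xs = u" "last xs = v"
    using walk_through_component[OF z(1)] z(2) unfolding A_def by blast
  have "{u, v} \<subseteq> neighbourhood V E B"
    using neighbourhood_subset_other_component[OF covers \<open>\<Omega> \<subseteq> V\<close> S y] z(2)
    unfolding B_def S_def A_def by blast
  then obtain ys where ys: "walk E (B \<union> {v, u}) ys" "hd ys = v" "last ys = u"
    using walk_through_component[of y "V - S" v V E u] y \<open>\<Omega> \<subseteq> V\<close> unfolding B_def by blast
  have "{u, v} \<in> F'"
  proof (rule chordal_separated_walks_adjacent[OF F'(3) _ _ _ _ uv(3) \<open>A \<inter> B = {}\<close> _ _ apart])
    show "walk F' (A \<union> {u, v}) xs" "walk F' (B \<union> {v, u}) ys"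
      using walk_mono[OF xs(1) F'(1)] walk_mono[OF ys(1) F'(1)] by blast+
    show "A \<subseteq> V" "B \<subseteq> V" "u \<in> V" "v \<in> V" "u \<notin> A \<union> B" "v \<notin> A \<union> B"
      using A B uv z(2) \<open>\<Omega> \<subseteq> V\<close> unfolding S_def A_def by blast+
  qed (use xs ys in simp_all)
  with \<open>{u, v} \<notin> F'\<close> show False ..
qed

lemma potential_maximal_cliqueI:
  assumes "graph V E" "\<Omega> \<subseteq> V" "no_full_component V E \<Omega>" "covers_non_edges V E \<Omega>"
  shows "potential_maximal_clique V E \<Omega>"
proof -
  obtain T where mt: "minimal_triangulation V (add_clique E \<Omega>) T"
    using minimal_triangulation_exists[OF graph_add_clique[OF assms(1,2)]] by blast
  then have T: "graph V T" "add_clique E \<Omega> \<subseteq> T" "chordal V T"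
    and minimal: "\<And>F'. add_clique E \<Omega> \<subseteq> F' \<Longrightarrow> F' \<subset> T \<Longrightarrow> \<not> chordal V F'"
    unfolding minimal_triangulation_def by auto
  have "\<not> chordal V F'" if "E \<subseteq> F'" "F' \<subset> T" for F'
  proof
    assume "chordal V F'"
    then have "{u, v} \<in> F'" if "u \<in> \<Omega>" "v \<in> \<Omega>" "u \<noteq> v" for u v
      using completion_edges_forced[OF mt assms(2-4) \<open>E \<subseteq> F'\<close> _ _ that] \<open>F' \<subset> T\<close> by blast
    then have "add_clique E \<Omega> \<subseteq> F'" using \<open>E \<subseteq> F'\<close> unfolding add_clique_def by blast
    then show False using minimal \<open>F' \<subset> T\<close> \<open>chordal V F'\<close> by blast
  qed
  then have "minimal_triangulation V E T"
    using T unfolding minimal_triangulation_def add_clique_def by blast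
  then show ?thesis
    using maximal_clique_of_completion[OF mt assms(2,3)]
      unfolding potential_maximal_clique_def by blast
qed

section \<open>Expansions\<close>

locale expansion =
  fixes VG :: "'v set" and EG :: "'v set set" and M :: "'v \<Rightarrow> 'a set" and EM :: "'v \<Rightarrow> 'a set set"
  assumes graph_G: "graph VG EG"
    and graph_M: "\<And>v. v \<in> VG \<Longrightarrow> graph (M v) (EM v)"
    and M_nonempty: "\<And>v. v \<in> VG \<Longrightarrow> M v \<noteq> {}"
    and M_disjoint: "\<And>v w. v \<in> VG \<Longrightarrow> w \<in> VG \<Longrightarrow> v \<noteq> w \<Longrightarrow> M v \<inter> M w = {}"
begin

abbreviation VH :: "'a set" where "VH \<equiv> expansion_vertices VG M"
abbreviation EH :: "'a set set" where "EH \<equiv> expansion_edges VG EG M EM"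

definition rep :: "'v \<Rightarrow> 'a" where "rep v = (SOME x. x \<in> M v)"

definition proj :: "'a \<Rightarrow> 'v" where "proj x = (THE v. v \<in> VG \<and> x \<in> M v)"

text \<open>\<open>contraction \<Omega>\<close> is the set \<open>\<Omega>\<^sub>G\<close> of the statement; \<open>\<Omega>\<close> is saturated when it
  equals the union of the modules meeting it.\<close>
definition contraction :: "'a set \<Rightarrow> 'v set" where
  "contraction \<Omega> = {v \<in> VG. M v \<inter> \<Omega> \<noteq> {}}"

lemma contraction_subset: "contraction \<Omega> \<subseteq> VG"
  unfolding contraction_def by blast

lemma rep_in: "v \<in> VG \<Longrightarrow> rep v \<in> M v"
  unfolding rep_def using M_nonempty by (simp add: some_in_eq)

lemma proj_eq: "v \<in> VG \<Longrightarrow> x \<in> M v \<Longrightarrow> proj x = v"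
  unfolding proj_def using M_disjoint by (intro the_equality) blast+

lemma proj_in: "x \<in> VH \<Longrightarrow> proj x \<in> VG \<and> x \<in> M (proj x)"
  unfolding expansion_vertices_def using proj_eq by blast

lemma edge_lift: "{p, q} \<in> EG \<Longrightarrow> x \<in> M p \<Longrightarrow> y \<in> M q \<Longrightarrow> {x, y} \<in> EH"
  using graph_edge[OF graph_G] unfolding expansion_edges_def by blast

lemma edge_proj:
  assumes "{x, y} \<in> EH" "x \<in> M p" "y \<in> M q" "p \<in> VG" "q \<in> VG" "p \<noteq> q"
  shows "{p, q} \<in> EG"
  using assms(1) unfolding expansion_edges_def
proof
  assume "{x, y} \<in> (\<Union>v\<in>VG. EM v)"
  then obtain w where w: "w \<in> VG" "{x, y} \<in> EM w" by blast
  then have "x \<in> M w" "y \<in> M w" using graph_edge[OF graph_M[OF w(1)] w(2)] by auto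
  then have "p = w" "q = w" using assms(2-5) M_disjoint w(1) by blast+
  then show ?thesis using assms(6) by simp
next
  assume "{x, y} \<in> {{a, b} | a b. \<exists>i\<in>VG. \<exists>j\<in>VG. {i, j} \<in> EG \<and> a \<in> M i \<and> b \<in> M j}"
  then obtain a b i j where h: "{x, y} = {a, b}" "i \<in> VG" "j \<in> VG" "{i, j} \<in> EG" "a \<in> M i" "b \<in> M j"
    by blast
  then have "p = i \<and> q = j \<or> p = j \<and> q = i"
    using assms(2-5) M_disjoint by (auto simp: doubleton_eq_iff)
  then show ?thesis using h(4) by (auto simp: insert_commute)
qed

lemma rep_non_edge:
  assumes "u \<in> VG" "v \<in> VG" "u \<noteq> v" "{u, v} \<notin> EG"
  shows "rep u \<noteq> rep v" "{rep u, rep v} \<notin> EH"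
proof
  assume "rep u = rep v"
  then have "rep u \<in> M u \<inter> M v" using rep_in[OF assms(1)] rep_in[OF assms(2)] by simp
  then show False using M_disjoint[OF assms(1-3)] by simp
next
  show "{rep u, rep v} \<notin> EH"
  proof
    assume "{rep u, rep v} \<in> EH"
    then show False using edge_proj[OF _ rep_in[OF assms(1)] rep_in[OF assms(2)] assms(1-3)]
      assms(4) by blast
  qed
qed

context
  fixes \<Omega> :: "'a set"
  assumes saturated: "\<Omega> = (\<Union>v\<in>contraction \<Omega>. M v)"
begin

lemma saturated_subset_VH: "\<Omega> \<subseteq> VH"
  using saturated contraction_subset unfolding expansion_vertices_def by blast

lemma mem_iff_proj_mem: "x \<in> VH \<Longrightarrow> x \<in> \<Omega> \<longleftrightarrow> proj x \<in> contraction \<Omega>"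
  using proj_in saturated unfolding contraction_def by blast

lemma M_subset:
  assumes "v \<in> contraction \<Omega>"
  shows "M v \<subseteq> \<Omega>"
proof -
  have "M v \<subseteq> (\<Union>w\<in>contraction \<Omega>. M w)" using assms by blast
  then show ?thesis by (simp only: saturated[symmetric])
qed

lemma rep_outside:
  assumes "v \<in> VG - contraction \<Omega>"
  shows "rep v \<in> VH - \<Omega>"
proof -
  have "rep v \<in> M v" using assms rep_in by blast
  then have "rep v \<in> VH" "proj (rep v) = v"
    using assms proj_eq unfolding expansion_vertices_def by blast+
  then show ?thesis using assms mem_iff_proj_mem by simp
qed

lemma rep_component:
  assumes "z \<in> VG - contraction \<Omega>" "a \<in> component EG (VG - contraction \<Omega>) z"
  shows "rep a \<in> component EH (VH - \<Omega>) (rep z)"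
proof -
  have "(z, a) \<in> (adj_in EG (VG - contraction \<Omega>))\<^sup>*" using assms(2) unfolding component_def by simp
  then show ?thesis
  proof (induction rule: rtrancl_induct)
    case (step b b')
    then have "b \<in> VG - contraction \<Omega>" "b' \<in> VG - contraction \<Omega>" "{b, b'} \<in> EG"
      unfolding adj_in_def by auto
    moreover have "{rep b, rep b'} \<in> EH" using edge_lift rep_in calculation by blast
    ultimately show ?case using component_step[OF step.IH] rep_outside by blast
  qed (simp add: component_self)
qed

lemma proj_component:
  assumes "x \<in> VH - \<Omega>" "y \<in> component EH (VH - \<Omega>) x"
  shows "proj y \<in> component EG (VG - contraction \<Omega>) (proj x)"
proof -
  have "(x, y) \<in> (adj_in EH (VH - \<Omega>))\<^sup>*" using assms(2) unfolding component_def by simp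
  then show ?thesis
  proof (induction rule: rtrancl_induct)
    case (step y z)
    then have yz: "y \<in> VH - \<Omega>" "z \<in> VH - \<Omega>" "{y, z} \<in> EH" unfolding adj_in_def by auto
    then have "proj y \<in> VG - contraction \<Omega>" "proj z \<in> VG - contraction \<Omega>"
      using proj_in mem_iff_proj_mem by blast+
    moreover have "proj y \<noteq> proj z \<Longrightarrow> {proj y, proj z} \<in> EG"
      using edge_proj[OF yz(3)] proj_in yz(1,2) by blast
    ultimately show ?case using component_step[OF step.IH] step.IH
      by (cases "proj y = proj z") simp_all
  qed (simp add: component_self)
qed

lemma proj_neighbourhood:
  assumes x: "x \<in> VH - \<Omega>" and w: "w \<in> contraction \<Omega>" "y \<in> M w"
    and y: "y \<in> neighbourhood VH EH (component EH (VH - \<Omega>) x)"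
  shows "w \<in> neighbourhood VG EG (component EG (VG - contraction \<Omega>) (proj x))"
proof -
  let ?A = "component EG (VG - contraction \<Omega>) (proj x)"
  obtain c where c: "c \<in> component EH (VH - \<Omega>) x" "{c, y} \<in> EH"
    using y unfolding neighbourhood_def by blast
  then have "c \<in> VH - \<Omega>" using component_subset[OF x] by blast
  then have pc: "proj c \<in> VG - contraction \<Omega>" "c \<in> M (proj c)"
    using proj_in mem_iff_proj_mem by blast+
  then have "{proj c, w} \<in> EG" using edge_proj[OF c(2) pc(2) w(2)] contraction_subset w(1) by blast
  moreover have "proj c \<in> ?A" by (rule proj_component[OF x c(1)])
  moreover have "proj x \<in> VG - contraction \<Omega>" using x proj_in mem_iff_proj_mem by blast
  then have "w \<notin> ?A" using component_subset[of "proj x" "VG - contraction \<Omega>" EG] w(1) by blast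
  ultimately show ?thesis using w(1) contraction_subset unfolding neighbourhood_def by blast
qed

text \<open>A full component of \<open>VG - contraction \<Omega>\<close> lifts, via representatives, to one of \<open>VH - \<Omega>\<close>.\<close>
lemma no_full_component_contraction:
  assumes "no_full_component VH EH \<Omega>"
  shows "no_full_component VG EG (contraction \<Omega>)"
  unfolding no_full_component_def
proof (intro ballI notI)
  fix z assume z: "z \<in> VG - contraction \<Omega>"
  let ?A = "component EG (VG - contraction \<Omega>) z"
  let ?C = "component EH (VH - \<Omega>) (rep z)"
  assume full: "contraction \<Omega> \<subseteq> neighbourhood VG EG ?A"
  have "k \<in> neighbourhood VH EH ?C" if "k \<in> \<Omega>" for k
  proof -
    have k: "k \<in> VH" "proj k \<in> contraction \<Omega>" "k \<in> M (proj k)"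
      using that saturated_subset_VH mem_iff_proj_mem proj_in by blast+
    then obtain a where a: "a \<in> ?A" "{a, proj k} \<in> EG"
      using full unfolding neighbourhood_def by blast
    then have "a \<in> VG" using component_subset[OF z] by blast
    then have "{rep a, k} \<in> EH" using edge_lift[OF a(2) rep_in k(3)] by blast
    moreover have "rep a \<in> ?C" by (rule rep_component[OF z a(1)])
    moreover have "k \<notin> ?C" using component_subset[OF rep_outside[OF z]] that by blast
    ultimately show ?thesis using k(1) unfolding neighbourhood_def by blast
  qed
  then show False using assms rep_outside[OF z] unfolding no_full_component_def by blast
qed

text \<open>A component of \<open>VH - \<Omega>\<close> covering representatives of \<open>u\<close> and \<open>v\<close> projects into a component of
  \<open>VG - contraction \<Omega>\<close> covering \<open>u\<close> and \<open>v\<close>.\<close>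
lemma covers_non_edges_contraction:
  assumes "covers_non_edges VH EH \<Omega>"
  shows "covers_non_edges VG EG (contraction \<Omega>)"
  unfolding covers_non_edges_def
proof (intro ballI impI)
  fix u v assume uv: "u \<in> contraction \<Omega>" "v \<in> contraction \<Omega>" "u \<noteq> v \<and> {u, v} \<notin> EG"
  then have G: "u \<in> VG" "v \<in> VG" using contraction_subset by blast+
  have "rep u \<in> \<Omega>" "rep v \<in> \<Omega>" using M_subset[OF uv(1)] M_subset[OF uv(2)]
    rep_in[OF G(1)] rep_in[OF G(2)] by blast+
  moreover have "rep u \<noteq> rep v" "{rep u, rep v} \<notin> EH" using rep_non_edge[OF G] uv(3) by blast+
  ultimately obtain x where x: "x \<in> VH - \<Omega>"
    "{rep u, rep v} \<subseteq> neighbourhood VH EH (component EH (VH - \<Omega>) x)"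
    using assms unfolding covers_non_edges_def by blast
  let ?A = "component EG (VG - contraction \<Omega>) (proj x)"
  have z: "proj x \<in> VG - contraction \<Omega>" using x(1) proj_in mem_iff_proj_mem by blast
  have "w \<in> neighbourhood VG EG ?A"
    if "w \<in> contraction \<Omega>" "y \<in> M w" "y \<in> neighbourhood VH EH (component EH (VH - \<Omega>) x)" for w y
    by (rule proj_neighbourhood[OF x(1) that])
  then have "{u, v} \<subseteq> neighbourhood VG EG ?A" using uv(1,2) G rep_in x(2) by blast
  then show
    "\<exists>z\<in>VG - contraction \<Omega>. {u, v} \<subseteq> neighbourhood VG EG (component EG (VG - contraction \<Omega>) z)"
    using z by blast
qed

end

end

theorem lemma6:
  fixes VG :: "'v set" and EG :: "'v set set"
    and M :: "'v \<Rightarrow> 'a set" and EM :: "'v \<Rightarrow> 'a set set" and \<Omega> :: "'a set"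
  assumes "graph VG EG"
    and "\<And>v. v \<in> VG \<Longrightarrow> graph (M v) (EM v)"
    and "\<And>v. v \<in> VG \<Longrightarrow> M v \<noteq> {}"
    and "\<And>v w. v \<in> VG \<Longrightarrow> w \<in> VG \<Longrightarrow> v \<noteq> w \<Longrightarrow> M v \<inter> M w = {}"
    and "potential_maximal_clique (expansion_vertices VG M) (expansion_edges VG EG M EM) \<Omega>"
    and "\<Omega> = (\<Union>v\<in>{v \<in> VG. M v \<inter> \<Omega> \<noteq> {}}. M v)"
  shows "potential_maximal_clique VG EG {v \<in> VG. M v \<inter> \<Omega> \<noteq> {}}"
proof -
  interpret expansion VG EG M EM using assms(1-4) by unfold_locales
  have saturated: "\<Omega> = (\<Union>v\<in>contraction \<Omega>. M v)" using assms(6) unfolding contraction_def .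
  have "no_full_component VH EH \<Omega>" "covers_non_edges VH EH \<Omega>"
    using potential_maximal_clique_no_full_component[OF assms(5)]
      potential_maximal_clique_covers_non_edges[OF assms(5)] .
  then have "potential_maximal_clique VG EG (contraction \<Omega>)"
    using no_full_component_contraction[OF saturated] covers_non_edges_contraction[OF saturated]
    by (intro potential_maximal_cliqueI[OF assms(1) contraction_subset])
  then show ?thesis unfolding contraction_def .
qed

end
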